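(* Let $(\mathcal{S}_1,\mathcal{S}_2)$ be an $S$-pair, let $i\in\{1,2\}$, and let $A \in \mathcal{S}_i$ with $\alpha = |A|$. Suppose that for some $j \in \{1,\dots,\alpha-1\}$ and some $x \in A$, every $j$-element subset of $A - x$ lies in $\mathcal{S}_i$. Then every $j$-element subset of $A$ lies in $\mathcal{S}_i$.
   Context: Let $S$ be a finite nonempty set and $\mathcal{S}_1, \mathcal{S}_2 \subseteq 2^S$. The pair $(\mathcal{S}_1,\mathcal{S}_2)$ is an $S$-pair if: (S1) for $i=1,2$, if $A,B \in \mathcal{S}_i$ with $B \subset A$ and $|A| = |B|+1$, then every $|B|$-element subset of $A$ lies in $\mathcal{S}_i$; (S2) for $i=1,2$, if $A,B \in \mathcal{S}_i$ with $|A|=|B|$ and $|A\cap B| = |A|-1$, then $A\cup B \in \mathcal{S}_i$; (S3) for $i=1,2$, not every singleton $\{s\}$, $s\in S$, lies in $\mathcal{S}_i$, and $S \notin \mathcal{S}_i$; (S4) for $k = 1,\dots,|S|-1$ and $x\in S$, if every $k$-element subset of $S - x$ lies in $\mathcal{S}_1$, then not every $(|S|-k)$-element subset of $S-x$ lies in $\mathcal{S}_2$. *)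

theory Defs
  imports Main
begin

definition S_pair :: "'a set \<Rightarrow> 'a set set \<Rightarrow> 'a set set \<Rightarrow> bool" where
  "S_pair S S1 S2 \<longleftrightarrow>
     finite S \<and> S \<noteq> {} \<and> S1 \<subseteq> Pow S \<and> S2 \<subseteq> Pow S \<and>
     (\<forall>F \<in> {S1, S2}.
        (\<forall>A \<in> F. \<forall>B \<in> F. B \<subset> A \<and> card A = card B + 1 \<longrightarrow>
            (\<forall>C. C \<subseteq> A \<and> card C = card B \<longrightarrow> C \<in> F)) \<and>
        (\<forall>A \<in> F. \<forall>B \<in> F. card A = card B \<and> card (A \<inter> B) = card A - 1 \<longrightarrow>
            A \<union> B \<in> F) \<and>
        \<not> (\<forall>s \<in> S. {s} \<in> F) \<and> S \<notin> F) \<and>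
     (\<forall>k \<in> {1..card S - 1}. \<forall>x \<in> S.
        (\<forall>C. C \<subseteq> S - {x} \<and> card C = k \<longrightarrow> C \<in> S1) \<longrightarrow>
        \<not> (\<forall>C. C \<subseteq> S - {x} \<and> card C = card S - k \<longrightarrow> C \<in> S2))"

end

theory Submission
  imports Defs
begin

(* Condition (S2) lets us
   climb: two sets of F of size k + 1 sharing k elements have their union in F, so every
   subset of A - x of size at least j lies in F. Condition (S1) lets us descend from A:
   for C \<subseteq> A with x \<in> C and y \<in> A - C, the set C + y - x has the size of C, lies in A - x
   and is a corank-one subset of C + y, so C lies in F as soon as C + y does. *)

definition covering_closed :: "'a set set \<Rightarrow> bool" where
  "covering_closed F \<longleftrightarrow>
     (\<forall>A \<in> F. \<forall>B \<in> F. B \<subset> A \<and> card A = card B + 1 \<longrightarrow>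
        (\<forall>C. C \<subseteq> A \<and> card C = card B \<longrightarrow> C \<in> F))"

definition adjacent_union_closed :: "'a set set \<Rightarrow> bool" where
  "adjacent_union_closed F \<longleftrightarrow>
     (\<forall>A \<in> F. \<forall>B \<in> F. card A = card B \<and> card (A \<inter> B) = card A - 1 \<longrightarrow> A \<union> B \<in> F)"

lemma covering_closedD:
  assumes "covering_closed F" and "A \<in> F" and "B \<in> F" and "B \<subset> A"
    and "card A = card B + 1" and "C \<subseteq> A" and "card C = card B"
  shows "C \<in> F"
  using assms unfolding covering_closed_def by blast

lemma adjacent_union_closedD:
  assumes "adjacent_union_closed F" and "A \<in> F" and "B \<in> F"
    and "card A = card B" and "card (A \<inter> B) = card A - 1"
  shows "A \<union> B \<in> F"
  using assms unfolding adjacent_union_closed_def by blast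

lemma S_pair_familyD:
  assumes "S_pair S S1 S2" and "F \<in> {S1, S2}"
  shows "covering_closed F" and "adjacent_union_closed F" and "finite S" and "F \<subseteq> Pow S"
proof -
  from assms(1) have "\<forall>F \<in> {S1, S2}. covering_closed F \<and> adjacent_union_closed F"
    and "finite S" "S1 \<subseteq> Pow S" "S2 \<subseteq> Pow S"
    unfolding S_pair_def covering_closed_def adjacent_union_closed_def by meson+
  with assms(2) show "covering_closed F" "adjacent_union_closed F" "finite S" "F \<subseteq> Pow S"
    by auto
qed

lemma adjacent_union_closed_upward:
  assumes F: "adjacent_union_closed F" and "1 \<le> j"
    and base: "\<And>C. C \<subseteq> X \<Longrightarrow> card C = j \<Longrightarrow> C \<in> F"
    and "C \<subseteq> X" and "j \<le> card C"
  shows "C \<in> F"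
  using assms(4,5)
proof (induction "card C" arbitrary: C rule: less_induct)
  case less
  show ?case
  proof (cases "card C = j")
    case True
    with base less.prems show ?thesis by blast
  next
    case False
    with less.prems \<open>1 \<le> j\<close> have c2: "card C \<ge> 2" and fin: "finite C"
      by (auto intro: card_ge_0_finite)
    then obtain a b where ab: "a \<in> C" "b \<in> C" "a \<noteq> b"
      by (metis One_nat_def Suc_1 Suc_le_eq card_le_Suc0_iff_eq not_less_eq_eq)
    have ca: "card (C - {a}) = card C - 1" and cb: "card (C - {b}) = card C - 1"
      using ab fin by auto
    have "j \<le> card C - 1" using False less.prems(2) by linarith
    then have "C - {a} \<in> F" "C - {b} \<in> F"
      using less.hyps[of "C - {a}"] less.hyps[of "C - {b}"] ca cb less.prems(1) c2 by auto
    moreover have "card ((C - {a}) \<inter> (C - {b})) = card (C - {a}) - 1"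
    proof -
      have "(C - {a}) \<inter> (C - {b}) = C - {a, b}" by blast
      moreover have "card (C - {a, b}) = card C - 2"
        using ab fin by (subst card_Diff_subset) auto
      ultimately show ?thesis using ca by simp
    qed
    ultimately have "(C - {a}) \<union> (C - {b}) \<in> F"
      using adjacent_union_closedD[OF F] ca cb by simp
    moreover have "(C - {a}) \<union> (C - {b}) = C" using ab by blast
    ultimately show ?thesis by simp
  qed
qed

lemma covering_closed_downward:
  assumes F: "covering_closed F" and "finite A" and "A \<in> F" and "x \<in> A"
    and avoid_x: "\<And>C. C \<subseteq> A - {x} \<Longrightarrow> j \<le> card C \<Longrightarrow> C \<in> F"
    and "C \<subseteq> A" and "j \<le> card C"
  shows "C \<in> F"
  using assms(6,7)
proof (induction "card A - card C" arbitrary: C rule: less_induct)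
  case less
  consider "C = A" | "x \<notin> C" | "C \<subset> A" "x \<in> C" using less.prems by blast
  then show ?case
  proof cases
    case 1
    with \<open>A \<in> F\<close> show ?thesis by simp
  next
    case 2
    with avoid_x less.prems show ?thesis by blast
  next
    case 3
    then obtain y where y: "y \<in> A" "y \<notin> C" by blast
    have fin: "finite C" using less.prems \<open>finite A\<close> finite_subset by blast
    have cD: "card (insert y C) = card C + 1" using y fin by simp
    have DA: "insert y C \<subseteq> A" using y less.prems by blast
    then have "card (insert y C) \<le> card A" using \<open>finite A\<close> card_mono by blast
    then have DF: "insert y C \<in> F"
      using less.hyps[of "insert y C"] DA cD less.prems by simp
    have cB: "card (insert y C - {x}) = card C" using cD 3 fin by simp
    moreover have "insert y C - {x} \<subseteq> A - {x}" using DA by blast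
    ultimately have BF: "insert y C - {x} \<in> F" using avoid_x less.prems by simp
    have "insert y C - {x} \<subset> insert y C" using 3 by blast
    from covering_closedD[OF F DF BF this] show ?thesis using cD cB by auto
  qed
qed

lemma closed_family_large_subsets:
  assumes "covering_closed F" and "adjacent_union_closed F"
    and "finite A" and "A \<in> F" and "x \<in> A" and "1 \<le> j"
    and "\<And>C. C \<subseteq> A - {x} \<Longrightarrow> card C = j \<Longrightarrow> C \<in> F"
    and "C \<subseteq> A" and "j \<le> card C"
  shows "C \<in> F"
  using covering_closed_downward[of F A x j C] adjacent_union_closed_upward[of F j "A - {x}"] assms
  by blast

theorem mainTheorem6:
  fixes S :: "'a set" and S1 S2 :: "'a set set"
  assumes "S_pair S S1 S2"
    and "i \<in> {1::nat, 2}"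
    and "A \<in> (if i = 1 then S1 else S2)"
    and "j \<in> {1..card A - 1}"
    and "x \<in> A"
    and "\<forall>C. C \<subseteq> A - {x} \<and> card C = j \<longrightarrow> C \<in> (if i = 1 then S1 else S2)"
  shows "\<forall>C. C \<subseteq> A \<and> card C = j \<longrightarrow> C \<in> (if i = 1 then S1 else S2)"
proof -
  let ?F = "if i = 1 then S1 else S2"
  have F: "?F \<in> {S1, S2}" by simp
  have "finite A"
    using S_pair_familyD(3,4)[OF assms(1) F] assms(3) finite_subset by blast
  then show ?thesis
    using closed_family_large_subsets[of ?F A x j]
      S_pair_familyD(1,2)[OF assms(1) F] assms(3-6) by auto
qed

end
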